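(* Let $\lambda\in\mathbb{C}$ with $|\lambda|>1$, and let $g,h\in \mathrm{SL}(2,\mathbb{C})$ be $$g=\begin{pmatrix}\lambda&0\\0&\lambda^{-1}\end{pmatrix},\qquad h=\begin{pmatrix}a&b\\c&d\end{pmatrix}.$$ Put $M_g=|\lambda-1|+|\lambda^{-1}-1|$ and suppose $M_g<1$. If the subgroup $\langle g,h\rangle$ is discrete and non-elementary, then each of the following strict inequalities holds: $$|bc|^{1/2}>\frac{1-M_g}{M_g},\qquad |1+bc|^{1/2}>\frac{1-M_g}{M_g},\qquad |1+bc|+|bc|>\frac{2(1-M_g)}{M_g^2}.$$
   Context: A subgroup of $\mathrm{SL}(2,\mathbb{C})$ is discrete if it is discrete in the matrix topology. It is elementary if its action on $\mathbb{H}^3\cup\partial\mathbb{H}^3$ (via Möbius transformations) has a finite orbit; otherwise it is non-elementary. Since $|\lambda|>1$, $g$ is loxodromic. *)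

theory Defs
  imports "HOL-Analysis.Analysis"
begin

type_synonym cmat2 = "complex^2^2"

definition mat2 :: "complex \<Rightarrow> complex \<Rightarrow> complex \<Rightarrow> complex \<Rightarrow> cmat2" where
  "mat2 a b c d = (\<chi> i j. if i = 1 then (if j = 1 then a else b) else (if j = 1 then c else d))"

definition SL2C :: "cmat2 set" where
  "SL2C = {A. det A = 1}"

inductive_set gen_subgroup :: "cmat2 set \<Rightarrow> cmat2 set" for S where
  gen_one: "mat 1 \<in> gen_subgroup S"
| gen_base: "A \<in> S \<Longrightarrow> A \<in> gen_subgroup S"
| gen_inv: "A \<in> S \<Longrightarrow> matrix_inv A \<in> gen_subgroup S"
| gen_mult: "A \<in> gen_subgroup S \<Longrightarrow> B \<in> gen_subgroup S \<Longrightarrow> A ** B \<in> gen_subgroup S"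

definition discrete_group :: "cmat2 set \<Rightarrow> bool" where
  "discrete_group G \<longleftrightarrow> (\<forall>A\<in>G. \<exists>e>0. \<forall>B\<in>G. dist B A < e \<longrightarrow> B = A)"

text \<open>Points of the closed upper half-space model H^3 \<union> \<partial>H^3:
  interior points (z,t) with t > 0, finite boundary points z \<in> C, and \<infinity>.\<close>
datatype hpoint = Inner complex real | Bnd complex | Infty

definition valid_hpoint :: "hpoint \<Rightarrow> bool" where
  "valid_hpoint p = (case p of Inner z t \<Rightarrow> t > 0 | _ \<Rightarrow> True)"

text \<open>Action of a matrix [[a,b],[c,d]] of determinant 1 by the Poincare extension
  of the Moebius transformation z \<mapsto> (az+b)/(cz+d).\<close>
definition mob_act :: "cmat2 \<Rightarrow> hpoint \<Rightarrow> hpoint" where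
  "mob_act A p =
    (let a = A$1$1; b = A$1$2; c = A$2$1; d = A$2$2 in
     case p of
       Inner z t \<Rightarrow>
         (let D = (cmod (c*z+d))\<^sup>2 + (cmod c)\<^sup>2 * t\<^sup>2 in
          Inner (((a*z+b) * cnj (c*z+d) + a * cnj c * complex_of_real (t\<^sup>2)) / complex_of_real D) (t / D))
     | Bnd z \<Rightarrow> (if c*z+d = 0 then Infty else Bnd ((a*z+b)/(c*z+d)))
     | Infty \<Rightarrow> (if c = 0 then Infty else Bnd (a/c)))"

definition elementary :: "cmat2 set \<Rightarrow> bool" where
  "elementary G \<longleftrightarrow> (\<exists>p. valid_hpoint p \<and> finite ((\<lambda>A. mob_act A p) ` G))"

end

theory Submission
  imports Defs
begin

text \<open>
  Write \<open>g = diag(l, l\<inverse>)\<close> and \<open>h = [a b; c d]\<close>. If \<open>|l - l\<inverse>|\<^sup>2 (1 + |bc|) < 1\<close>, the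
  Shimizu--Leutbecher sequence \<open>h\<^sub>0 = h\<close>, \<open>h\<^sub>n\<^sub>+\<^sub>1 = h\<^sub>n g h\<^sub>n\<inverse>\<close> converges to \<open>g\<close>, and fast enough
  that the conjugates \<open>g\<^sup>-\<^sup>j h\<^sub>2\<^sub>j g\<^sup>j\<close> still converge to \<open>g\<close>. In a discrete group one of them
  must equal \<open>g\<close>, so some \<open>h\<^sub>n\<close> is diagonal; since \<open>h\<^sub>n\<^sub>+\<^sub>1\<close> is diagonal or antidiagonal exactly
  when \<open>h\<^sub>n\<close> is, \<open>h\<close> then preserves \<open>{0, \<infinity>}\<close> and \<open>\<langle>g, h\<rangle>\<close> is elementary.

  For a non-elementary discrete \<open>\<langle>g, h\<rangle>\<close> this yields \<open>|l - l\<inverse>|\<^sup>2 (1 + |bc|) \<ge> 1\<close>, and likewise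
  for \<open>h g h\<inverse>\<close>, whose off-diagonal product is \<open>-bc (1 + bc) (l - l\<inverse>)\<^sup>2\<close>. As
  \<open>|l - l\<inverse>| \<le> M\<^sub>g\<close>, the three inequalities follow by real algebra.
\<close>

lemma mat2_nth [simp]:
  "mat2 a b c d $ 1 $ 1 = a" "mat2 a b c d $ 1 $ 2 = b"
  "mat2 a b c d $ 2 $ 1 = c" "mat2 a b c d $ 2 $ 2 = d"
  by (simp_all add: mat2_def)

lemma mat2_entries: "mat2 (A$1$1) (A$1$2) (A$2$1) (A$2$2) = A"
  unfolding mat2_def vec_eq_iff forall_2 by simp

lemma mat2_eq_iff: "mat2 a b c d = mat2 a' b' c' d' \<longleftrightarrow> a = a' \<and> b = b' \<and> c = c' \<and> d = d'"
  by (metis mat2_nth)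

lemma mat2_mult:
  "mat2 a b c d ** mat2 e f g h = mat2 (a*e + b*g) (a*f + b*h) (c*e + d*g) (c*f + d*h)"
  unfolding matrix_matrix_mult_def vec_eq_iff forall_2 by (simp add: sum_2 mat2_def)

lemma mat_1_eq_mat2: "mat 1 = mat2 1 0 0 1"
  unfolding mat_def vec_eq_iff forall_2 by (simp add: mat2_def)

lemma det_mat2: "det (mat2 a b c d) = a*d - b*c"
  by (simp add: det_2)

lemma dist_mat2_le:
  "dist (mat2 a b c d) (mat2 a' b' c' d') \<le> cmod (a - a') + cmod (b - b') + cmod (c - c') + cmod (d - d')"
proof -
  have row: "dist (x :: 'a::metric_space^2) y \<le> dist (x$1) (y$1) + dist (x$2) (y$2)" for x y
    unfolding dist_vec_def using L2_set_le_sum[of UNIV "\<lambda>i. dist (x$i) (y$i)"] by (simp add: sum_2)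
  have "dist (mat2 a b c d) (mat2 a' b' c' d')
      \<le> dist (mat2 a b c d $ 1) (mat2 a' b' c' d' $ 1) + dist (mat2 a b c d $ 2) (mat2 a' b' c' d' $ 2)"
    by (rule row)
  also have "\<dots> \<le> (cmod (a - a') + cmod (b - b')) + (cmod (c - c') + cmod (d - d'))"
    by (intro add_mono order_trans[OF row]) (simp_all add: dist_norm)
  finally show ?thesis by simp
qed

lemma tendsto_mat2:
  assumes "(a \<longlongrightarrow> a0) F" "(b \<longlongrightarrow> b0) F" "(c \<longlongrightarrow> c0) F" "(d \<longlongrightarrow> d0) F"
  shows "((\<lambda>x. mat2 (a x) (b x) (c x) (d x)) \<longlongrightarrow> mat2 a0 b0 c0 d0) F"
proof (rule tendsto_dist_iff[THEN iffD2], rule Lim_null_comparison)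
  show "\<forall>\<^sub>F x in F. norm (dist (mat2 (a x) (b x) (c x) (d x)) (mat2 a0 b0 c0 d0))
          \<le> cmod (a x - a0) + cmod (b x - b0) + cmod (c x - c0) + cmod (d x - d0)"
    by (simp add: dist_mat2_le)
  have "((\<lambda>x. cmod (a x - a0) + cmod (b x - b0) + cmod (c x - c0) + cmod (d x - d0))
          \<longlongrightarrow> cmod (a0 - a0) + cmod (b0 - b0) + cmod (c0 - c0) + cmod (d0 - d0)) F"
    by (intro tendsto_intros assms)
  then show "((\<lambda>x. cmod (a x - a0) + cmod (b x - b0) + cmod (c x - c0) + cmod (d x - d0)) \<longlongrightarrow> 0) F"
    by simp
qed

definition adj2 :: "cmat2 \<Rightarrow> cmat2" where
  "adj2 A = mat2 (A$2$2) (-(A$1$2)) (-(A$2$1)) (A$1$1)"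

lemma adj2_mat2 [simp]: "adj2 (mat2 a b c d) = mat2 d (-b) (-c) a"
  by (simp add: adj2_def)

lemma adj2_adj2 [simp]: "adj2 (adj2 A) = A"
  by (simp add: adj2_def mat2_entries)

lemma det_adj2 [simp]: "det (adj2 A) = det A"
  by (simp add: adj2_def det_mat2 det_2 algebra_simps)

lemma adj2_mult: "adj2 (A ** B) = adj2 B ** adj2 A"
  by (subst (1 2) mat2_entries[of A, symmetric], subst (1 2) mat2_entries[of B, symmetric])
     (simp add: mat2_mult algebra_simps)

lemma matrix_inv_eq_adj2:
  assumes "det A = 1"
  shows "matrix_inv A = adj2 A"
proof -
  obtain a b c d where A: "A = mat2 a b c d" and det: "a*d - b*c = 1"
    using assms mat2_entries det_mat2 by metis
  have right: "A ** adj2 A = mat 1" and left: "adj2 A ** A = mat 1"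
    using det by (simp_all add: A mat2_mult mat_1_eq_mat2 mat2_eq_iff algebra_simps)
  show ?thesis
    unfolding matrix_inv_def
  proof (rule some_equality)
    fix B assume "A ** B = mat 1 \<and> B ** A = mat 1"
    then show "B = adj2 A"
      by (metis left matrix_mul_assoc matrix_mul_lid matrix_mul_rid)
  qed (use left right in simp)
qed

lemma gen_subgroup_det:
  assumes "\<forall>A\<in>S. det A = 1" "A \<in> gen_subgroup S"
  shows "det A = 1"
  using assms(2)
proof induction
  case gen_one
  then show ?case by (simp add: mat_1_eq_mat2 det_mat2)
next
  case (gen_base A)
  then show ?case using assms(1) by simp
next
  case (gen_inv A)
  then show ?case using assms(1) by (simp add: matrix_inv_eq_adj2)
next
  case (gen_mult A B)
  then show ?case by (simp add: det_mul)
qed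

lemma gen_subgroup_adj2_closed:
  assumes "\<forall>A\<in>S. det A = 1" "A \<in> gen_subgroup S"
  shows "adj2 A \<in> gen_subgroup S"
  using assms(2)
proof induction
  case gen_one
  then show ?case using gen_subgroup.gen_one[of S] by (simp add: mat_1_eq_mat2)
next
  case (gen_base A)
  then show ?case using assms(1) by (metis matrix_inv_eq_adj2 gen_subgroup.gen_inv)
next
  case (gen_inv A)
  then show ?case using assms(1) by (simp add: matrix_inv_eq_adj2 gen_subgroup.gen_base)
next
  case (gen_mult A B)
  then show ?case by (simp add: adj2_mult gen_subgroup.gen_mult)
qed

lemma discrete_group_eventually_eq:
  assumes "discrete_group G" "g \<in> G" "\<forall>\<^sub>F x in F. X x \<in> G" "(X \<longlongrightarrow> g) F"
  shows "\<forall>\<^sub>F x in F. X x = g"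
proof -
  obtain e where "e > 0" and isolated: "\<forall>B\<in>G. dist B g < e \<longrightarrow> B = g"
    using assms(1,2) unfolding discrete_group_def by blast
  have "\<forall>\<^sub>F x in F. dist (X x) g < e"
    using tendstoD[OF assms(4) \<open>e > 0\<close>] .
  with assms(3) show ?thesis
    by eventually_elim (use isolated in blast)
qed

lemma gen_subgroup_conj_diag_pow:
  assumes "\<forall>A\<in>S. det A = 1" "mat2 l 0 0 (inverse l) \<in> gen_subgroup S" "l \<noteq> 0"
    and "mat2 a b c d \<in> gen_subgroup S"
  shows "mat2 a (b * inverse l ^ (2*j)) (c * l ^ (2*j)) d \<in> gen_subgroup S"
proof (induction j)
  case (Suc j)
  have "mat2 (inverse l) 0 0 l \<in> gen_subgroup S"
    using gen_subgroup_adj2_closed[OF assms(1,2)] by simp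
  with Suc assms(2) have "mat2 (inverse l) 0 0 l ** mat2 a (b * inverse l ^ (2*j)) (c * l ^ (2*j)) d
      ** mat2 l 0 0 (inverse l) \<in> gen_subgroup S"
    by (intro gen_subgroup.gen_mult)
  then show ?case
    using assms(3) by (simp add: mat2_mult field_simps power_add)
qed (use assms(4) in simp)

definition diag_or_antidiag :: "cmat2 \<Rightarrow> bool" where
  "diag_or_antidiag A \<longleftrightarrow> (A$1$2 = 0 \<and> A$2$1 = 0) \<or> (A$1$1 = 0 \<and> A$2$2 = 0)"

lemma diag_or_antidiag_mat2:
  "diag_or_antidiag (mat2 a b c d) \<longleftrightarrow> (b = 0 \<and> c = 0) \<or> (a = 0 \<and> d = 0)"
  by (simp add: diag_or_antidiag_def)

lemma diag_or_antidiag_mult: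
  "diag_or_antidiag A \<Longrightarrow> diag_or_antidiag B \<Longrightarrow> diag_or_antidiag (A ** B)"
  using mat2_mult[of "A$1$1" "A$1$2" "A$2$1" "A$2$2" "B$1$1" "B$1$2" "B$2$1" "B$2$2"]
  by (auto simp: mat2_entries diag_or_antidiag_def)

lemma gen_subgroup_diag_or_antidiag:
  assumes "\<forall>A\<in>S. det A = 1 \<and> diag_or_antidiag A" "A \<in> gen_subgroup S"
  shows "diag_or_antidiag A"
  using assms(2)
proof induction
  case gen_one
  then show ?case by (simp add: mat_1_eq_mat2 diag_or_antidiag_mat2)
next
  case (gen_base A)
  then show ?case using assms(1) by simp
next
  case (gen_inv A)
  then show ?case using assms(1) by (auto simp: matrix_inv_eq_adj2 adj2_def diag_or_antidiag_def)
next
  case (gen_mult A B)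
  then show ?case by (simp add: diag_or_antidiag_mult)
qed

lemma mob_act_diag_or_antidiag_zero:
  assumes "det A = 1" "diag_or_antidiag A"
  shows "mob_act A (Bnd 0) \<in> {Bnd 0, Infty}"
proof -
  consider "A$1$2 = 0" "A$2$1 = 0" | "A$1$1 = 0" "A$2$2 = 0"
    using assms(2) diag_or_antidiag_def by blast
  then show ?thesis
  proof cases
    case 1
    with assms(1) have "A$2$2 \<noteq> 0" by (auto simp: det_2)
    with 1 show ?thesis by (simp add: mob_act_def Let_def)
  next
    case 2
    then show ?thesis by (simp add: mob_act_def Let_def)
  qed
qed

lemma elementary_if_diag_or_antidiag:
  assumes "\<forall>A\<in>S. det A = 1 \<and> diag_or_antidiag A"
  shows "elementary (gen_subgroup S)"
  unfolding elementary_def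
proof (intro exI conjI)
  show "valid_hpoint (Bnd 0)" by (simp add: valid_hpoint_def)
  have "(\<lambda>A. mob_act A (Bnd 0)) ` gen_subgroup S \<subseteq> {Bnd 0, Infty}"
    using assms gen_subgroup_det gen_subgroup_diag_or_antidiag mob_act_diag_or_antidiag_zero
    by (metis (no_types, lifting) image_subsetI)
  then show "finite ((\<lambda>A. mob_act A (Bnd 0)) ` gen_subgroup S)"
    by (rule finite_subset) simp
qed

lemma norm_gt_1_inverse:
  fixes l :: complex
  assumes "cmod l > 1"
  shows "l \<noteq> 0" "l - inverse l \<noteq> 0" "l + inverse l \<noteq> 0"
proof -
  have "cmod (inverse l) < cmod l"
    using assms by (simp add: norm_inverse) (metis inverse_less_1_iff less_trans zero_less_one)
  then show "l \<noteq> 0" "l - inverse l \<noteq> 0" "l + inverse l \<noteq> 0"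
    by (auto simp: add_eq_0_iff)
qed

definition shimizu_step :: "complex \<Rightarrow> cmat2 \<Rightarrow> cmat2" where
  "shimizu_step l A = A ** mat2 l 0 0 (inverse l) ** adj2 A"

lemma shimizu_step_nth:
  assumes "det A = 1"
  shows "shimizu_step l A $1$1 = l + (l - inverse l) * (A$1$2 * A$2$1)"
    and "shimizu_step l A $1$2 = A$1$1 * A$1$2 * (inverse l - l)"
    and "shimizu_step l A $2$1 = A$2$1 * A$2$2 * (l - inverse l)"
    and "shimizu_step l A $2$2 = inverse l - (l - inverse l) * (A$1$2 * A$2$1)"
proof -
  have ad: "A$1$1 * A$2$2 = 1 + A$1$2 * A$2$1"
    using assms by (simp add: det_2 algebra_simps)
  have "shimizu_step l A = mat2 (l * (A$1$1 * A$2$2) - inverse l * (A$1$2 * A$2$1))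
      (A$1$1 * A$1$2 * (inverse l - l)) (A$2$1 * A$2$2 * (l - inverse l))
      (inverse l * (A$1$1 * A$2$2) - l * (A$1$2 * A$2$1))"
    unfolding shimizu_step_def
    by (subst (1 2) mat2_entries[of A, symmetric]) (simp add: mat2_mult algebra_simps)
  then show "shimizu_step l A $1$1 = l + (l - inverse l) * (A$1$2 * A$2$1)"
    and "shimizu_step l A $1$2 = A$1$1 * A$1$2 * (inverse l - l)"
    and "shimizu_step l A $2$1 = A$2$1 * A$2$2 * (l - inverse l)"
    and "shimizu_step l A $2$2 = inverse l - (l - inverse l) * (A$1$2 * A$2$1)"
    by (simp_all add: ad algebra_simps)
qed

lemma det_shimizu_step:
  assumes "det A = 1" "l \<noteq> 0"
  shows "det (shimizu_step l A) = 1"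
  using assms by (simp add: shimizu_step_def det_mul det_mat2)

lemma diag_or_antidiag_shimizu_step_iff:
  assumes "det A = 1" "cmod l > 1"
  shows "diag_or_antidiag (shimizu_step l A) \<longleftrightarrow> diag_or_antidiag A"
proof -
  note l = norm_gt_1_inverse[OF assms(2)]
  have ad: "A$1$1 * A$2$2 - A$1$2 * A$2$1 = 1"
    using assms(1) by (simp add: det_2)
  \<comment> \<open>The step has trace \<open>l + l\<inverse>\<close>, so it is never antidiagonal.\<close>
  have "shimizu_step l A $1$1 + shimizu_step l A $2$2 \<noteq> 0"
    using l(3) by (simp add: shimizu_step_nth[OF assms(1)])
  then have "diag_or_antidiag (shimizu_step l A)
      \<longleftrightarrow> A$1$1 * A$1$2 = 0 \<and> A$2$1 * A$2$2 = 0"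
    using l(2) by (auto simp: diag_or_antidiag_def shimizu_step_nth[OF assms(1)])
  also have "\<dots> \<longleftrightarrow> diag_or_antidiag A"
    using ad by (auto simp: diag_or_antidiag_def)
  finally show ?thesis .
qed

lemma diag_or_antidiag_shimizu_iter_iff:
  assumes "det A = 1" "cmod l > 1"
  shows "diag_or_antidiag ((shimizu_step l ^^ n) A) \<longleftrightarrow> diag_or_antidiag A"
proof -
  have "det ((shimizu_step l ^^ n) A) = 1 \<and>
        (diag_or_antidiag ((shimizu_step l ^^ n) A) \<longleftrightarrow> diag_or_antidiag A)"
  proof (induction n)
    case (Suc n)
    then show ?case
      using det_shimizu_step diag_or_antidiag_shimizu_step_iff norm_gt_1_inverse(1) assms
      by auto
  qed (use assms in simp)
  then show ?thesis by blast
qed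

lemma LIMSEQ_zero_if_ratio_tendsto:
  fixes f r :: "nat \<Rightarrow> 'a::{real_normed_field, banach}"
  assumes rec: "\<And>n. f (Suc n) = f n * r n" and r: "r \<longlonglongrightarrow> \<rho>" and "norm \<rho> < 1"
  shows "f \<longlonglongrightarrow> 0"
proof -
  define c where "c = (1 + norm \<rho>) / 2"
  have "c < 1" "norm \<rho> < c" using assms(3) by (simp_all add: c_def)
  then obtain N where N: "\<And>n. n \<ge> N \<Longrightarrow> norm (r n) < c"
    using order_tendstoD(2)[OF tendsto_norm[OF r]] unfolding eventually_sequentially by blast
  have "norm (f (Suc n)) \<le> c * norm (f n)" if "n \<ge> N" for n
    using N[OF that] by (simp add: rec norm_mult) (metis less_imp_le mult.commute mult_left_mono norm_ge_zero)
  then have "summable f" by (rule summable_ratio_test[OF \<open>c < 1\<close>])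
  then show ?thesis by (rule summable_LIMSEQ_zero)
qed

locale shimizu_sequence =
  fixes l :: complex and h :: cmat2
  assumes norm_l: "cmod l > 1"
    and det_h: "det h = 1"
    and small: "(cmod (l - inverse l))\<^sup>2 * (1 + cmod (h$1$2 * h$2$1)) < 1"
begin

definition seq :: "nat \<Rightarrow> cmat2" where
  "seq n = (shimizu_step l ^^ n) h"

abbreviation offdiag_product :: "nat \<Rightarrow> complex" where
  "offdiag_product n \<equiv> seq n $1$2 * seq n $2$1"

lemma det_seq: "det (seq n) = 1"
  by (induction n) (simp_all add: seq_def det_h det_shimizu_step norm_gt_1_inverse[OF norm_l])

lemma seq_Suc: "seq (Suc n) = shimizu_step l (seq n)"
  by (simp add: seq_def)

lemmas seq_Suc_nth = shimizu_step_nth[OF det_seq, of l, folded seq_Suc]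

lemma seq_0: "seq 0 = h"
  by (simp add: seq_def)

lemma diag_product_seq: "seq n $1$1 * seq n $2$2 = 1 + offdiag_product n"
  using det_seq[of n] by (simp add: det_2 algebra_simps)

lemma offdiag_product_Suc:
  "offdiag_product (Suc n) = - offdiag_product n * (1 + offdiag_product n) * (l - inverse l)\<^sup>2"
proof -
  have "offdiag_product (Suc n) = - (seq n $1$1 * seq n $2$2) * offdiag_product n * (l - inverse l)\<^sup>2"
    by (simp add: seq_Suc_nth power2_eq_square algebra_simps)
  then show ?thesis by (simp add: diag_product_seq algebra_simps)
qed

definition rate :: real where
  "rate = (cmod (l - inverse l))\<^sup>2 * (1 + cmod (offdiag_product 0))"

lemma rate_nonneg: "rate \<ge> 0" and rate_lt_1: "rate < 1"
  using small by (simp_all add: rate_def seq_0)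

lemma norm_offdiag_product_le: "cmod (offdiag_product n) \<le> rate ^ n * cmod (offdiag_product 0)"
proof (induction n)
  case (Suc n)
  have "rate ^ n * cmod (offdiag_product 0) \<le> cmod (offdiag_product 0)"
    using rate_nonneg rate_lt_1 by (simp add: mult_left_le_one_le power_le_one)
  then have "cmod (1 + offdiag_product n) \<le> 1 + cmod (offdiag_product 0)"
    using Suc norm_triangle_ineq[of 1 "offdiag_product n"] by simp
  have "cmod (offdiag_product (Suc n))
      = cmod (offdiag_product n) * cmod (1 + offdiag_product n) * (cmod (l - inverse l))\<^sup>2"
    by (simp only: offdiag_product_Suc norm_mult norm_minus_cancel norm_power)
  also have "\<dots> \<le> (rate ^ n * cmod (offdiag_product 0)) * (1 + cmod (offdiag_product 0))
      * (cmod (l - inverse l))\<^sup>2"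
    using Suc.IH \<open>cmod (1 + offdiag_product n) \<le> _\<close> rate_nonneg
    by (intro mult_right_mono mult_mono) simp_all
  also have "\<dots> = rate ^ Suc n * cmod (offdiag_product 0)"
    by (simp add: rate_def algebra_simps)
  finally show ?case .
qed simp

lemma offdiag_product_tendsto: "offdiag_product \<longlonglongrightarrow> 0"
proof (rule Lim_null_comparison)
  show "\<forall>\<^sub>F n in sequentially. norm (offdiag_product n) \<le> rate ^ n * cmod (offdiag_product 0)"
    by (simp add: norm_offdiag_product_le)
  show "(\<lambda>n. rate ^ n * cmod (offdiag_product 0)) \<longlonglongrightarrow> 0"
    by (intro tendsto_mult_left_zero LIMSEQ_power_zero) (use rate_nonneg rate_lt_1 in auto)
qed

lemma diag_tendsto:
  shows "(\<lambda>n. seq n $1$1) \<longlonglongrightarrow> l" and "(\<lambda>n. seq n $2$2) \<longlonglongrightarrow> inverse l"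
proof -
  have "(\<lambda>n. seq (Suc n) $1$1) \<longlonglongrightarrow> l + (l - inverse l) * 0"
    unfolding seq_Suc_nth by (intro tendsto_intros offdiag_product_tendsto)
  then show "(\<lambda>n. seq n $1$1) \<longlonglongrightarrow> l"
    by (simp add: LIMSEQ_imp_Suc)
  have "(\<lambda>n. seq (Suc n) $2$2) \<longlonglongrightarrow> inverse l - (l - inverse l) * 0"
    unfolding seq_Suc_nth by (intro tendsto_intros offdiag_product_tendsto)
  then show "(\<lambda>n. seq n $2$2) \<longlonglongrightarrow> inverse l"
    by (simp add: LIMSEQ_imp_Suc)
qed

lemma norm_diff_inverse_lt_1: "cmod (l - inverse l) < 1"
proof -
  have "(cmod (l - inverse l))\<^sup>2 \<le> rate"
    by (simp add: rate_def mult_le_cancel_left1)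
  then show ?thesis
    using rate_lt_1 by (metis abs_norm_cancel abs_square_less_1 order_le_less_trans)
qed

text \<open>Scaled as in the conjugate \<open>g\<^sup>-\<^sup>j h\<^sub>2\<^sub>j g\<^sup>j\<close> (see \<open>conj_seq\<close>), the off-diagonal entries still
  tend to \<open>0\<close>: their successive ratios tend to \<open>\<plusminus>(l - l\<inverse>)\<close>, which has norm less than \<open>1\<close>.\<close>

lemma upper_scaled_tendsto: "(\<lambda>n. seq n $1$2 / l ^ n) \<longlonglongrightarrow> 0"
proof (rule LIMSEQ_zero_if_ratio_tendsto)
  show "seq (Suc n) $1$2 / l ^ Suc n = seq n $1$2 / l ^ n * (seq n $1$1 * (inverse l - l) / l)" for n
    by (simp add: seq_Suc_nth mult_ac)
  have "(\<lambda>n. seq n $1$1 * (inverse l - l) / l) \<longlonglongrightarrow> l * (inverse l - l) / l"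
    by (intro tendsto_intros diag_tendsto) (use norm_gt_1_inverse(1)[OF norm_l] in simp)
  then show "(\<lambda>n. seq n $1$1 * (inverse l - l) / l) \<longlonglongrightarrow> inverse l - l"
    by (rule tendsto_eq_rhs) (use norm_gt_1_inverse(1)[OF norm_l] in simp)
  show "cmod (inverse l - l) < 1"
    using norm_diff_inverse_lt_1 by (simp add: norm_minus_commute)
qed

lemma lower_scaled_tendsto: "(\<lambda>n. seq n $2$1 * l ^ n) \<longlonglongrightarrow> 0"
proof (rule LIMSEQ_zero_if_ratio_tendsto)
  show "seq (Suc n) $2$1 * l ^ Suc n = seq n $2$1 * l ^ n * (seq n $2$2 * (l - inverse l) * l)" for n
    by (simp add: seq_Suc_nth)
  have "(\<lambda>n. seq n $2$2 * (l - inverse l) * l) \<longlonglongrightarrow> inverse l * (l - inverse l) * l"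
    by (intro tendsto_intros diag_tendsto)
  then show "(\<lambda>n. seq n $2$2 * (l - inverse l) * l) \<longlonglongrightarrow> l - inverse l"
    by (rule tendsto_eq_rhs) (use norm_gt_1_inverse(1)[OF norm_l] in \<open>simp add: mult_ac\<close>)
qed (rule norm_diff_inverse_lt_1)

definition conj_seq :: "nat \<Rightarrow> cmat2" where
  "conj_seq j = mat2 (seq (2*j) $1$1) (seq (2*j) $1$2 * inverse l ^ (2*j))
                     (seq (2*j) $2$1 * l ^ (2*j)) (seq (2*j) $2$2)"

lemma conj_seq_tendsto: "conj_seq \<longlonglongrightarrow> mat2 l 0 0 (inverse l)"
proof -
  have even: "(\<lambda>j. X (2*j)) \<longlonglongrightarrow> L" if "X \<longlonglongrightarrow> L" for X :: "nat \<Rightarrow> complex" and L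
    using LIMSEQ_subseq_LIMSEQ[OF that, of "\<lambda>j. 2*j"] by (simp add: strict_mono_def comp_def)
  show ?thesis
    unfolding conj_seq_def using upper_scaled_tendsto
    by (intro tendsto_mat2 even diag_tendsto lower_scaled_tendsto)
       (simp add: power_inverse divide_inverse)
qed

lemma seq_in_gen_subgroup:
  assumes "\<forall>A\<in>S. det A = 1" "mat2 l 0 0 (inverse l) \<in> gen_subgroup S" "h \<in> gen_subgroup S"
  shows "seq n \<in> gen_subgroup S"
proof (induction n)
  case (Suc n)
  moreover have "adj2 (seq n) \<in> gen_subgroup S"
    by (rule gen_subgroup_adj2_closed[OF assms(1) Suc])
  ultimately show ?case
    unfolding seq_Suc shimizu_step_def using assms(2) by (intro gen_subgroup.gen_mult)
qed (simp add: seq_0 assms(3))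

lemma seq_eventually_diagonal:
  assumes "\<forall>A\<in>S. det A = 1" "mat2 l 0 0 (inverse l) \<in> gen_subgroup S" "h \<in> gen_subgroup S"
    and "discrete_group (gen_subgroup S)"
  shows "\<exists>n. seq n $1$2 = 0 \<and> seq n $2$1 = 0"
proof -
  have l0: "l \<noteq> 0" by (rule norm_gt_1_inverse(1)[OF norm_l])
  have "conj_seq j \<in> gen_subgroup S" for j
  proof -
    have "seq (2*j) \<in> gen_subgroup S" by (rule seq_in_gen_subgroup[OF assms(1-3)])
    then show ?thesis
      unfolding conj_seq_def by (intro gen_subgroup_conj_diag_pow[OF assms(1,2) l0]) (simp add: mat2_entries)
  qed
  then have "\<forall>\<^sub>F j in sequentially. conj_seq j \<in> gen_subgroup S"
    by (intro always_eventually allI)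
  from discrete_group_eventually_eq[OF assms(4,2) this conj_seq_tendsto]
  obtain j where "conj_seq j = mat2 l 0 0 (inverse l)"
    using eventually_happens'[OF sequentially_bot] by blast
  then have "seq (2*j) $1$2 = 0" "seq (2*j) $2$1 = 0"
    using l0 by (simp_all add: conj_seq_def mat2_eq_iff)
  then show ?thesis by blast
qed

end

lemma diag_or_antidiag_if_shimizu_small:
  assumes "\<forall>A\<in>S. det A = 1" "discrete_group (gen_subgroup S)"
    and "cmod l > 1" "mat2 l 0 0 (inverse l) \<in> gen_subgroup S"
    and "A \<in> gen_subgroup S" "(cmod (l - inverse l))\<^sup>2 * (1 + cmod (A$1$2 * A$2$1)) < 1"
  shows "diag_or_antidiag A"
proof -
  have det: "det A = 1" by (rule gen_subgroup_det[OF assms(1,5)])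
  interpret shimizu_sequence l A
    using assms det by unfold_locales
  obtain n where "seq n $1$2 = 0" "seq n $2$1 = 0"
    using seq_eventually_diagonal assms by blast
  then have "diag_or_antidiag ((shimizu_step l ^^ n) A)"
    by (simp add: diag_or_antidiag_def seq_def)
  then show ?thesis
    using diag_or_antidiag_shimizu_iter_iff[OF det assms(3)] by blast
qed

lemma sqrt_gt_if_one_le_sq_mult:
  fixes M s :: real
  assumes "0 < M" "M < 1" "1 \<le> M\<^sup>2 * (1 + s)"
  shows "(1 - M) / M < sqrt s"
proof (rule real_less_rsqrt)
  have "(1 - M)\<^sup>2 < 1 - M\<^sup>2"
    using assms(1,2) by (simp add: power2_eq_square algebra_simps)
  also have "\<dots> \<le> M\<^sup>2 * s"
    using assms(3) by (simp add: algebra_simps)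
  finally show "((1 - M) / M)\<^sup>2 < s"
    using assms(1) by (simp add: power_divide field_simps)
qed

lemma sqrt_gt_if_one_le_sq_mult_prod:
  fixes M s u :: real
  assumes "0 < M" "M < 1" "0 \<le> u" "s \<le> 1 + u" "1 \<le> M\<^sup>2 * (1 + M\<^sup>2 * s * u)"
  shows "(1 - M) / M < sqrt u"
proof (rule ccontr)
  define r where "r = (1 - M) / M"
  assume "\<not> r < sqrt u"
  then have "u \<le> r\<^sup>2"
    using assms(3) by (metis not_le real_le_lsqrt real_sqrt_ge_zero order_trans sqrt_le_D)
  have "1 - M\<^sup>2 \<le> M\<^sup>2 * M\<^sup>2 * (s * u)"
    using assms(5) by (simp add: algebra_simps)
  also have "\<dots> \<le> M\<^sup>2 * M\<^sup>2 * ((1 + r\<^sup>2) * r\<^sup>2)"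
    using assms(3,4) \<open>u \<le> r\<^sup>2\<close> by (intro mult_left_mono mult_mono) auto
  also have "\<dots> = (M\<^sup>2 + (1 - M)\<^sup>2) * (1 - M)\<^sup>2"
    using assms(1) by (simp add: r_def power2_eq_square field_simps)
  also have "\<dots> \<le> (1 - M)\<^sup>2"
  proof (rule mult_left_le_one_le)
    have "M * M \<le> M" using assms(1,2) by (simp add: mult_le_cancel_left1)
    then show "M\<^sup>2 + (1 - M)\<^sup>2 \<le> 1" by (simp add: power2_eq_square algebra_simps)
  qed simp_all
  finally show False
    using assms(1,2) by (simp add: power2_eq_square algebra_simps)
qed

lemma sum_gt_if_one_le_sq_mult_prod:
  fixes M s u :: real
  assumes "0 < M" "M < 1" "0 \<le> s" "0 \<le> u" "1 \<le> M\<^sup>2 * (1 + M\<^sup>2 * s * u)"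
  shows "2 * (1 - M) / M\<^sup>2 < u + s"
proof -
  have "(1 - M)\<^sup>2 < 1 - M\<^sup>2"
    using assms(1,2) by (simp add: power2_eq_square algebra_simps)
  also have "\<dots> \<le> M\<^sup>2 * M\<^sup>2 * (s * u)"
    using assms(5) by (simp add: algebra_simps)
  also have "\<dots> \<le> M\<^sup>2 * M\<^sup>2 * ((u + s)\<^sup>2 / 4)"
  proof (rule mult_left_mono)
    show "s * u \<le> (u + s)\<^sup>2 / 4"
      using zero_le_power2[of "u - s"] by (simp add: power2_eq_square field_simps)
  qed simp
  finally have "(2 * (1 - M))\<^sup>2 < (M\<^sup>2 * (u + s))\<^sup>2"
    by (simp add: power2_eq_square algebra_simps)
  then have "2 * (1 - M) < M\<^sup>2 * (u + s)"
    by (rule power_less_imp_less_base) (use assms(3,4) in simp)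
  then show ?thesis
    using assms(1) by (simp add: pos_divide_less_eq mult.commute)
qed

theorem mainTheorem3:
  fixes lam a b c d :: complex
  assumes hlam: "cmod lam > 1"
    and hdet: "a * d - b * c = 1"
    and hM: "cmod (lam - 1) + cmod (inverse lam - 1) < 1"
    and hdisc: "discrete_group (gen_subgroup {mat2 lam 0 0 (inverse lam), mat2 a b c d})"
    and hnonel: "\<not> elementary (gen_subgroup {mat2 lam 0 0 (inverse lam), mat2 a b c d})"
  shows "let M = cmod (lam - 1) + cmod (inverse lam - 1) in
           sqrt (cmod (b * c)) > (1 - M) / M \<and>
           sqrt (cmod (1 + b * c)) > (1 - M) / M \<and>
           cmod (1 + b * c) + cmod (b * c) > 2 * (1 - M) / M\<^sup>2"
proof -
  define g h where "g = mat2 lam 0 0 (inverse lam)" and "h = mat2 a b c d"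
  define S where "S = {g, h}"
  define M m s u where "M = cmod (lam - 1) + cmod (inverse lam - 1)"
    and "m = cmod (lam - inverse lam)" and "s = cmod (b * c)" and "u = cmod (1 + b * c)"
  have det_S: "\<forall>A\<in>S. det A = 1"
    using hlam hdet by (simp add: S_def g_def h_def det_mat2 norm_gt_1_inverse(1))
  have g: "g \<in> gen_subgroup S" and h: "h \<in> gen_subgroup S"
    by (simp_all add: S_def gen_subgroup.gen_base)
  have disc: "discrete_group (gen_subgroup S)" and nonel: "\<not> elementary (gen_subgroup S)"
    using hdisc hnonel by (simp_all add: S_def g_def h_def)
  have not_dg: "\<not> diag_or_antidiag A" if "A \<in> {h, shimizu_step lam h}" for A
  proof -
    have "\<not> diag_or_antidiag h"
      using elementary_if_diag_or_antidiag[of S] det_S nonel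
      by (auto simp: S_def g_def h_def diag_or_antidiag_mat2)
    then show ?thesis
      using that diag_or_antidiag_shimizu_step_iff[OF _ hlam] det_S by (auto simp: S_def)
  qed
  have jorgensen: "1 \<le> m\<^sup>2 * (1 + cmod (A$1$2 * A$2$1))" if "A \<in> gen_subgroup S" "A \<in> {h, shimizu_step lam h}" for A
    using diag_or_antidiag_if_shimizu_small[OF det_S disc hlam g[unfolded g_def] that(1)] not_dg[OF that(2)]
    unfolding m_def by fastforce
  have step_h: "shimizu_step lam h \<in> gen_subgroup S"
    using g h gen_subgroup_adj2_closed[OF det_S h]
    by (simp add: shimizu_step_def g_def gen_subgroup.gen_mult)
  have "cmod (shimizu_step lam h $1$2 * shimizu_step lam h $2$1) = m\<^sup>2 * s * u"
  proof -
    have "shimizu_step lam h $1$2 * shimizu_step lam h $2$1 = - ((a * d) * (b * c) * (lam - inverse lam)\<^sup>2)"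
      using det_S by (simp add: S_def shimizu_step_nth h_def power2_eq_square algebra_simps)
    then have "cmod (shimizu_step lam h $1$2 * shimizu_step lam h $2$1) = cmod (a * d) * s * m\<^sup>2"
      by (simp only: norm_mult norm_minus_cancel norm_power s_def m_def)
    moreover have "a * d = 1 + b * c" using hdet by (simp add: algebra_simps)
    ultimately show ?thesis by (simp add: u_def mult_ac)
  qed
  then have J1: "1 \<le> m\<^sup>2 * (1 + s)" and J2: "1 \<le> m\<^sup>2 * (1 + m\<^sup>2 * s * u)"
    using jorgensen[OF h] jorgensen[OF step_h] by (simp_all add: h_def s_def mult.assoc)
  have "m \<le> M"
    unfolding m_def M_def using norm_triangle_ineq4[of "lam - 1" "inverse lam - 1"] by simp
  then have mM: "m\<^sup>2 \<le> M\<^sup>2" by (simp add: m_def power_mono)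
  have "0 < m" using norm_gt_1_inverse(2)[OF hlam] by (simp add: m_def)
  then have "0 < M" "M < 1" using \<open>m \<le> M\<close> hM by (simp_all add: M_def)
  have "0 \<le> s" "0 \<le> u" "s \<le> 1 + u"
    using norm_triangle_ineq4[of "1 + b * c" 1] by (simp_all add: s_def u_def)
  have "m\<^sup>2 * (1 + s) \<le> M\<^sup>2 * (1 + s)"
    using mM \<open>0 \<le> s\<close> by (simp add: mult_right_mono)
  with J1 have K1: "1 \<le> M\<^sup>2 * (1 + s)" by linarith
  have "m\<^sup>2 * (1 + m\<^sup>2 * s * u) \<le> M\<^sup>2 * (1 + M\<^sup>2 * s * u)"
    using mM \<open>0 \<le> s\<close> \<open>0 \<le> u\<close> by (intro mult_mono add_left_mono mult_right_mono) simp_all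
  with J2 have K2: "1 \<le> M\<^sup>2 * (1 + M\<^sup>2 * s * u)" by linarith
  show ?thesis
    unfolding M_def[symmetric] s_def[symmetric] u_def[symmetric] Let_def
    using sqrt_gt_if_one_le_sq_mult[OF \<open>0 < M\<close> \<open>M < 1\<close> K1]
      sqrt_gt_if_one_le_sq_mult_prod[OF \<open>0 < M\<close> \<open>M < 1\<close> \<open>0 \<le> u\<close> \<open>s \<le> 1 + u\<close> K2]
      sum_gt_if_one_le_sq_mult_prod[OF \<open>0 < M\<close> \<open>M < 1\<close> \<open>0 \<le> s\<close> \<open>0 \<le> u\<close> K2]
    by blast
qed

end
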